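(* Let $q\ge 1$ be an integer and let $X$ be a random variable such that $qX$ is integer-valued almost surely. Then for all real $t$, \[ \varphi_{\lfloor X\rfloor}(t)=\sum_{j=0}^{q-1} h_q(t+2\pi j)\,\varphi_X(t+2\pi j) \qquad\text{and}\qquad \varphi_{\langle X\rangle}(t)=\sum_{j=0}^{q-1} \tilde h_q(t+2\pi j)\,\varphi_X(t+2\pi j). \]
   Context: For a random variable $Y$, $\varphi_Y(t):=\mathbb E\, e^{\mathrm i tY}$ is its characteristic function. $\lfloor x\rfloor$ is $x$ rounded down to an integer, and $\langle x\rangle:=\lfloor x+\tfrac12\rfloor$ is $x$ rounded to the nearest integer, with ties broken upward. Define \[ h_q(t):=\frac1q\sum_{k=0}^{q-1}e^{-\mathrm i tk/q}=\frac{1-e^{-\mathrm i t}}{q(1-e^{-\mathrm i t/q})}, \] where the fraction is interpreted as $1$ when $t\in 2\pi q\mathbb Z$. If $q$ is even, define $\tilde h_q(t):=\frac1q\sum_{k=-q/2}^{q/2-1}e^{-\mathrm i tk/q}=e^{\mathrm i t/2}h_q(t)$. If $q$ is odd, define $\tilde h_q(t):=\frac1q\sum_{k=-(q-1)/2}^{(q-1)/2}e^{-\mathrm i tk/q}=\frac{\sin(t/2)}{q\sin(t/(2q))}$, again interpreted as $1$ when $t\in 2\pi q\mathbb Z$. *)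

theory Defs
  imports "HOL-Probability.Probability"
begin

definition charfun :: "'a measure \<Rightarrow> ('a \<Rightarrow> real) \<Rightarrow> real \<Rightarrow> complex" where
  "charfun M Y t = char (distr M borel Y) t"

definition round_near :: "real \<Rightarrow> int" where
  "round_near x = \<lfloor>x + 1/2\<rfloor>"

definition h :: "nat \<Rightarrow> real \<Rightarrow> complex" where
  "h q t = (1 / of_nat q) * (\<Sum>k<q. exp (- \<i> * complex_of_real (t * real k / real q)))"

definition h_tilde :: "nat \<Rightarrow> real \<Rightarrow> complex" where
  "h_tilde q t =
     (if even q then (1 / of_nat q) *
        (\<Sum>k\<in>{- int (q div 2) ..< int (q div 2)}. exp (- \<i> * complex_of_real (t * real_of_int k / real q)))
      else (1 / of_nat q) *
        (\<Sum>k\<in>{- int ((q - 1) div 2) .. int ((q - 1) div 2)}. exp (- \<i> * complex_of_real (t * real_of_int k / real q))))"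

end

theory Submission
  imports Defs
begin

text \<open>Both h_q and h_tilde_q average e^{-itk/q} over a window a, ..., a + q - 1 of q consecutive
  integers, with a = 0 and a = -(q div 2) respectively. If qX = m is an integer, summing this
  average times e^{i(t + 2 pi j)X} over j < q keeps, by orthogonality of the q-th roots of unity,
  only the unique k in the window with k = m (mod q), and the result is e^{itZ} with
  Z = (m - a) div q. For a = 0 this Z is the floor of X, for a = -(q div 2) it is X rounded to
  the nearest integer; taking expectations gives both identities.\<close>

definition window_kernel :: "nat \<Rightarrow> int \<Rightarrow> real \<Rightarrow> complex" where
  "window_kernel q a t =
     (1 / of_nat q) * (\<Sum>k\<in>{a..<a + int q}. exp (- \<i> * complex_of_real (t * real_of_int k / real q)))"

lemma h_eq_window_kernel: "h q = window_kernel q 0"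
proof
  fix t
  have "(\<Sum>k\<in>{0..<int q}. exp (- \<i> * complex_of_real (t * real_of_int k / real q)))
      = (\<Sum>k<q. exp (- \<i> * complex_of_real (t * real k / real q)))"
    by (simp add: image_atLeastZeroLessThan_int sum.reindex)
  then show "h q t = window_kernel q 0 t"
    unfolding h_def window_kernel_def by simp
qed

lemma h_tilde_eq_window_kernel: "h_tilde q = window_kernel q (- int (q div 2))"
proof
  fix t
  have "{- int (q div 2)..<- int (q div 2) + int q} =
      (if even q then {- int (q div 2)..<int (q div 2)}
       else {- int ((q - 1) div 2)..int ((q - 1) div 2)})"
    by (auto elim!: oddE)
  then show "h_tilde q t = window_kernel q (- int (q div 2)) t"
    unfolding h_tilde_def window_kernel_def by simp
qed

lemma sum_roots_of_unity_power:
  fixes d :: int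
  assumes "q > 0"
  shows "(\<Sum>j<q. iexp (2 * pi * real j * real_of_int d / real q))
       = (if int q dvd d then of_nat q else 0)"
proof -
  define z where "z = iexp (2 * pi * real_of_int d / real q)"
  have term_eq_power: "iexp (2 * pi * real j * real_of_int d / real q) = z ^ j" for j
    unfolding z_def by (simp add: exp_of_nat_mult[symmetric] algebra_simps)
  have z_eq_1: "z = 1 \<longleftrightarrow> int q dvd d"
  proof
    assume "z = 1"
    then obtain n :: int where "2 * pi * real_of_int d / real q = of_int (2 * n) * pi"
      unfolding z_def exp_eq_1 by auto
    then have "real_of_int d = real_of_int (int q * n)"
      using assms by (simp add: field_simps)
    then have "d = int q * n"
      by (simp only: of_int_eq_iff)
    then show "int q dvd d" ..
  next
    assume "int q dvd d"
    then obtain n where "d = int q * n" ..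
    then have "2 * pi * real_of_int d / real q = of_int (2 * n) * pi"
      using assms by simp
    then show "z = 1"
      unfolding z_def by (subst exp_eq_1) auto
  qed
  have "z ^ q = iexp (2 * pi * real_of_int d)"
    using assms by (simp add: z_def exp_of_nat_mult[symmetric] field_simps)
  also have "\<dots> = 1"
    by (subst exp_eq_1) (auto intro!: exI[of _ d])
  finally have "z ^ q = 1" .
  then show ?thesis
    unfolding term_eq_power using z_eq_1 by (simp add: sum_gp_strict)
qed

lemma diff_window_residue_eq:
  fixes a m n :: int
  shows "m - (a + (m - a) mod n) = n * ((m - a) div n)"
  using minus_mod_eq_mult_div[of "m - a" n] by (simp add: diff_diff_eq)

lemma dvd_diff_iff_eq_in_window:
  fixes a m k :: int
  assumes "k \<in> {a..<a + int q}"
  shows "int q dvd (m - k) \<longleftrightarrow> k = a + (m - a) mod int q"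
proof
  assume "int q dvd (m - k)"
  then have "(m - a) mod int q = (k - a) mod int q"
    by (simp add: mod_eq_dvd_iff)
  also have "\<dots> = k - a"
    using assms by (intro mod_pos_pos_trivial) auto
  finally show "k = a + (m - a) mod int q"
    by simp
next
  assume "k = a + (m - a) mod int q"
  then show "int q dvd (m - k)"
    by (simp add: diff_window_residue_eq)
qed

lemma sum_window_kernel_mult_iexp:
  fixes a m :: int
  assumes "q > 0" and "real q * x = real_of_int m"
  shows "(\<Sum>j<q. window_kernel q a (t + 2 * pi * real j) * iexp ((t + 2 * pi * real j) * x))
       = iexp (t * real_of_int ((m - a) div int q))"
proof -
  define K where "K = {a..<a + int q}"
  define k0 where "k0 = a + (m - a) mod int q"
  define e where "e k = iexp (t * real_of_int (m - k) / real q)" for k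
  have x: "x = real_of_int m / real q"
    using assms by (simp add: field_simps)
  have phase_split: "exp (- \<i> * complex_of_real ((t + 2 * pi * real j) * real_of_int k / real q))
        * iexp ((t + 2 * pi * real j) * x)
      = e k * iexp (2 * pi * real j * real_of_int (m - k) / real q)" for j k
    unfolding e_def x exp_add[symmetric] by (simp add: algebra_simps diff_divide_distrib)
  have "(\<Sum>j<q. window_kernel q a (t + 2 * pi * real j) * iexp ((t + 2 * pi * real j) * x))
      = (1 / of_nat q) * (\<Sum>k\<in>K. e k *
          (\<Sum>j<q. iexp (2 * pi * real j * real_of_int (m - k) / real q)))"
    unfolding window_kernel_def K_def sum_distrib_left sum_distrib_right phase_split[symmetric]
    by (subst sum.swap) (simp add: mult.assoc)
  also have "\<dots> = (1 / of_nat q) * (\<Sum>k\<in>K. if k = k0 then e k * of_nat q else 0)"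
  proof -
    have "(\<Sum>j<q. iexp (2 * pi * real j * real_of_int (m - k) / real q))
        = (if k = k0 then of_nat q else 0)" if "k \<in> K" for k
      using sum_roots_of_unity_power[OF assms(1), of "m - k"] dvd_diff_iff_eq_in_window[of k a q m] that
      unfolding K_def k0_def by simp
    then show ?thesis
      by (intro arg_cong[where f = "(*) _"] sum.cong) auto
  qed
  also have "\<dots> = e k0"
    using assms(1) by (simp add: K_def k0_def)
  also have "\<dots> = iexp (t * real_of_int ((m - a) div int q))"
    using assms(1) unfolding e_def k0_def diff_window_residue_eq by simp
  finally show ?thesis .
qed

lemma floor_eq_div_if_mult_eq:
  fixes m :: int
  assumes "q > 0" and "real q * x = real_of_int m"
  shows "\<lfloor>x\<rfloor> = m div int q"
proof -
  have "x = real_of_int m / real_of_int (int q)"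
    using assms by (simp add: field_simps)
  then show ?thesis
    by (simp only: floor_divide_of_int_eq)
qed

lemma round_near_eq_div_if_mult_eq:
  fixes m :: int
  assumes "q > 0" and "real q * x = real_of_int m"
  shows "round_near x = (m + int (q div 2)) div int q"
proof -
  have "x + 1 / 2 = real_of_int (2 * m + int q) / real_of_int (2 * int q)"
    using assms by (simp add: field_simps)
  then have "round_near x = (2 * m + int q) div (2 * int q)"
    unfolding round_near_def by (simp only: floor_divide_of_int_eq)
  also have "\<dots> = (2 * m + int q) div 2 div int q"
    by (simp add: zdiv_zmult2_eq)
  also have "(2 * m + int q) div 2 = m + int (q div 2)"
    by linarith
  finally show ?thesis .
qed

lemma charfun_eq_integral:
  assumes "Y \<in> borel_measurable M"
  shows "charfun M Y t = (\<integral>\<omega>. iexp (t * Y \<omega>) \<partial>M)"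
  unfolding charfun_def char_def using assms by (subst integral_distr) auto

lemma charfun_window_quotient:
  fixes a :: int
  assumes "prob_space M" and [measurable]: "X \<in> borel_measurable M" "Y \<in> borel_measurable M"
    and "q > 0"
    and "AE \<omega> in M. \<exists>m. real q * X \<omega> = real_of_int m \<and> Y \<omega> = real_of_int ((m - a) div int q)"
  shows "charfun M Y t
       = (\<Sum>j<q. window_kernel q a (t + 2 * pi * real j) * charfun M X (t + 2 * pi * real j))"
proof -
  have integrable: "integrable M (\<lambda>\<omega>. iexp (s * X \<omega>))" for s
    by (rule prob_space.integrable_iexp[OF assms(1)]) auto
  have "AE \<omega> in M. iexp (t * Y \<omega>)
      = (\<Sum>j<q. window_kernel q a (t + 2 * pi * real j)
                * iexp ((t + 2 * pi * real j) * X \<omega>))"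
    using assms(5)
  proof eventually_elim
    case (elim \<omega>)
    then obtain m where "real q * X \<omega> = real_of_int m" and "Y \<omega> = real_of_int ((m - a) div int q)"
      by blast
    then show ?case
      using sum_window_kernel_mult_iexp[OF assms(4)] by simp
  qed
  then have "charfun M Y t = (\<integral>\<omega>. (\<Sum>j<q. window_kernel q a (t + 2 * pi * real j)
                * iexp ((t + 2 * pi * real j) * X \<omega>)) \<partial>M)"
    unfolding charfun_eq_integral[OF assms(3)] by (rule integral_cong_AE[rotated 2]) measurable
  also have "\<dots> = (\<Sum>j<q. \<integral>\<omega>. window_kernel q a (t + 2 * pi * real j)
                * iexp ((t + 2 * pi * real j) * X \<omega>) \<partial>M)"
    using integrable by (intro Bochner_Integration.integral_sum integrable_mult_right)
  also have "\<dots> = (\<Sum>j<q. window_kernel q a (t + 2 * pi * real j) * charfun M X (t + 2 * pi * real j))"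
    unfolding charfun_eq_integral[OF assms(2)] by simp
  finally show ?thesis .
qed

theorem theorem1:
  fixes M :: "'a measure" and X :: "'a \<Rightarrow> real" and q :: nat
  assumes "prob_space M"
    and "X \<in> borel_measurable M"
    and "q \<ge> 1"
    and "AE \<omega> in M. real q * X \<omega> \<in> \<int>"
  shows "\<forall>t::real.
      charfun M (\<lambda>\<omega>. real_of_int \<lfloor>X \<omega>\<rfloor>) t
        = (\<Sum>j<q. h q (t + 2 * pi * real j) * charfun M X (t + 2 * pi * real j))
    \<and> charfun M (\<lambda>\<omega>. real_of_int (round_near (X \<omega>))) t
        = (\<Sum>j<q. h_tilde q (t + 2 * pi * real j) * charfun M X (t + 2 * pi * real j))"
proof -
  note [measurable] = assms(2)
  have [measurable]: "(\<lambda>\<omega>. real_of_int (round_near (X \<omega>))) \<in> borel_measurable M"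
    unfolding round_near_def by measurable
  have q: "q > 0"
    using assms(3) by simp
  have AE_int: "AE \<omega> in M. \<exists>m. real q * X \<omega> = real_of_int m"
    using assms(4) by eventually_elim (auto elim: Ints_cases)
  have floor: "charfun M (\<lambda>\<omega>. real_of_int \<lfloor>X \<omega>\<rfloor>) t
      = (\<Sum>j<q. window_kernel q 0 (t + 2 * pi * real j) * charfun M X (t + 2 * pi * real j))" for t
    using AE_int by (intro charfun_window_quotient[OF assms(1,2) _ q])
      (auto elim!: eventually_mono simp: floor_eq_div_if_mult_eq[OF q])
  have round: "charfun M (\<lambda>\<omega>. real_of_int (round_near (X \<omega>))) t
      = (\<Sum>j<q. window_kernel q (- int (q div 2)) (t + 2 * pi * real j) * charfun M X (t + 2 * pi * real j))" for t
    using AE_int by (intro charfun_window_quotient[OF assms(1,2) _ q])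
      (auto elim!: eventually_mono simp: round_near_eq_div_if_mult_eq[OF q])
  show ?thesis
    unfolding h_eq_window_kernel h_tilde_eq_window_kernel using floor round by blast
qed

end
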